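(* Let $\Gamma=\langle V,(w_u)_{u\in V},\alpha,\beta\rangle$ be a celebrity game with $\beta>1$, $n=|V|$ and $W=\sum_{u\in V}w_u$. Then $\mathrm{opt}(\Gamma)=\min\{\alpha,W\}\,(n-1)$.
   Context: A celebrity game $\Gamma=\langle V,(w_u)_{u\in V},\alpha,\beta\rangle$ consists of a set of players $V=\{1,\dots,n\}$, celebrity weights $w_u>0$, a link cost $\alpha>0$ and a critical distance $\beta$ with $1\le\beta\le n-1$. A strategy of player $u$ is a set $S_u\subseteq V\setminus\{u\}$; a strategy profile is $S=(S_1,\dots,S_n)$; its outcome graph $G[S]$ is the undirected graph on $V$ with edge set $\{\{u,v\}: u\in S_v\text{ or }v\in S_u\}$. With $d_G$ the graph distance (infinite between different connected components), the cost of player $u$ is $c_u(S)=\alpha|S_u|+\sum_{v:\,d_{G[S]}(u,v)>\beta}w_v$, the social cost is $C(S)=\sum_{u\in V}c_u(S)$, and $\mathrm{opt}(\Gamma)=\min_S C(S)$ over all strategy profiles. *)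

theory Defs
  imports Main "HOL-Library.Extended_Nat"
begin

text \<open>A strategy profile is a function S :: nat => nat set;
  it is valid for n players if S u is a subset of V - {u} for u in V, and (as a
  normalisation) S u = {} for u outside V.\<close>

definition valid_profile :: "nat \<Rightarrow> (nat \<Rightarrow> nat set) \<Rightarrow> bool" where
  "valid_profile n S \<longleftrightarrow> (\<forall>u. if u \<in> {1..n} then S u \<subseteq> {1..n} - {u} else S u = {})"

definition edge :: "(nat \<Rightarrow> nat set) \<Rightarrow> nat \<Rightarrow> nat \<Rightarrow> bool" where
  "edge S u v \<longleftrightarrow> u \<in> S v \<or> v \<in> S u"

fun reach :: "(nat \<Rightarrow> nat set) \<Rightarrow> nat \<Rightarrow> nat \<Rightarrow> nat \<Rightarrow> bool" where
  "reach S 0 u v \<longleftrightarrow> u = v"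
| "reach S (Suc k) u v \<longleftrightarrow> reach S k u v \<or> (\<exists>x. reach S k u x \<and> edge S x v)"

definition gdist :: "(nat \<Rightarrow> nat set) \<Rightarrow> nat \<Rightarrow> nat \<Rightarrow> enat" where
  "gdist S u v = (if \<exists>k. reach S k u v then enat (LEAST k. reach S k u v) else \<infinity>)"

definition player_cost :: "nat \<Rightarrow> (nat \<Rightarrow> real) \<Rightarrow> real \<Rightarrow> nat \<Rightarrow> (nat \<Rightarrow> nat set) \<Rightarrow> nat \<Rightarrow> real" where
  "player_cost n w \<alpha> \<beta> S u =
     \<alpha> * real (card (S u)) + (\<Sum>v\<in>{v\<in>{1..n}. gdist S u v > enat \<beta>}. w v)"

definition social_cost :: "nat \<Rightarrow> (nat \<Rightarrow> real) \<Rightarrow> real \<Rightarrow> nat \<Rightarrow> (nat \<Rightarrow> nat set) \<Rightarrow> real" where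
  "social_cost n w \<alpha> \<beta> S = (\<Sum>u\<in>{1..n}. player_cost n w \<alpha> \<beta> S u)"

definition opt :: "nat \<Rightarrow> (nat \<Rightarrow> real) \<Rightarrow> real \<Rightarrow> nat \<Rightarrow> real" where
  "opt n w \<alpha> \<beta> = Min (social_cost n w \<alpha> \<beta> ` {S. valid_profile n S})"

end

theory Submission
  imports Defs
begin

text \<open>Let a profile have k connected components. Fixing a BFS tree in each component, every
  non-root vertex has an edge to its parent, and these edges are distinct, so at least n - k
  links are bought. Each of the k roots is at infinite distance from all players outside its
  own component; summing over the roots, the weights of the players are counted at least
  (k - 1) W times. Hence the social cost is at least \<alpha> (n - k) + W (k - 1), which is at
  least min \<alpha> W (n - 1) since 1 \<le> k \<le> n. The empty profile attains W (n - 1), and since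
  \<beta> \<ge> 2 the star bought by player 1 attains \<alpha> (n - 1).\<close>

lemma reach_trans: "reach S a u x \<Longrightarrow> reach S b x v \<Longrightarrow> reach S (a + b) u v"
  by (induction b arbitrary: v) auto

lemma edge_sym: "edge S x y \<longleftrightarrow> edge S y x"
  unfolding edge_def by auto

lemma reach_sym: "reach S k u v \<Longrightarrow> reach S k v u"
proof (induction k arbitrary: v)
  case 0
  then show ?case by simp
next
  case (Suc k)
  show ?case
  proof (cases "reach S k u v")
    case True
    then show ?thesis using Suc.IH by simp
  next
    case False
    then obtain y where y: "reach S k u y" "edge S y v" using Suc.prems by auto
    have "reach S 1 v y" using y(2) edge_sym[of S y v] by auto
    with Suc.IH[OF y(1)] show ?thesis using reach_trans by fastforce
  qed
qed

lemma reach_closed: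
  assumes "valid_profile n S" "u \<in> {1..n}" "reach S k u v"
  shows "v \<in> {1..n}"
  using assms(3)
proof (induction k arbitrary: v)
  case 0
  then show ?case using assms(2) by simp
next
  case (Suc k)
  show ?case
  proof (cases "reach S k u v")
    case True
    then show ?thesis using Suc.IH by simp
  next
    case False
    then obtain x where x: "reach S k u x" "edge S x v" using Suc.prems by auto
    have "x \<in> {1..n}" using Suc.IH[OF x(1)] .
    with x(2) assms(1) show ?thesis
      unfolding edge_def valid_profile_def by (metis Diff_subset empty_iff subsetD)
  qed
qed

definition conn :: "(nat \<Rightarrow> nat set) \<Rightarrow> nat \<Rightarrow> nat \<Rightarrow> bool" where
  "conn S u v \<longleftrightarrow> (\<exists>k. reach S k u v)"

lemma conn_refl: "conn S u u"
  unfolding conn_def by (metis reach.simps(1))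

lemma conn_sym: "conn S u v \<Longrightarrow> conn S v u"
  unfolding conn_def using reach_sym by blast

lemma conn_trans: "conn S u v \<Longrightarrow> conn S v x \<Longrightarrow> conn S u x"
  unfolding conn_def using reach_trans by blast

lemma gdist_eq_infinity_iff: "gdist S u v = \<infinity> \<longleftrightarrow> \<not> conn S u v"
  unfolding gdist_def conn_def by auto

definition comp_rep :: "(nat \<Rightarrow> nat set) \<Rightarrow> nat \<Rightarrow> nat" where
  "comp_rep S v = (LEAST x. conn S v x)"

definition comp_reps :: "nat \<Rightarrow> (nat \<Rightarrow> nat set) \<Rightarrow> nat set" where
  "comp_reps n S = {v \<in> {1..n}. comp_rep S v = v}"

lemma conn_comp_rep: "conn S v (comp_rep S v)"
  unfolding comp_rep_def by (rule LeastI[of _ v]) (rule conn_refl)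

lemma comp_rep_eq: "conn S u v \<Longrightarrow> comp_rep S u = comp_rep S v"
proof -
  assume "conn S u v"
  then have "conn S u = conn S v" using conn_sym conn_trans by blast
  then show ?thesis unfolding comp_rep_def by simp
qed

lemma comp_rep_idem: "comp_rep S (comp_rep S v) = comp_rep S v"
  using comp_rep_eq[OF conn_comp_rep] by simp

lemma comp_rep_in_comp_reps:
  assumes "valid_profile n S" "v \<in> {1..n}"
  shows "comp_rep S v \<in> comp_reps n S"
proof -
  have "comp_rep S v \<in> {1..n}"
    using conn_comp_rep[of S v] reach_closed[OF assms] unfolding conn_def by blast
  then show ?thesis unfolding comp_reps_def using comp_rep_idem by auto
qed

lemma card_comp_reps_bounds:
  assumes "valid_profile n S" "n \<ge> 1"
  shows "1 \<le> card (comp_reps n S)" "card (comp_reps n S) \<le> n"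
proof -
  have "comp_reps n S \<noteq> {}" using comp_rep_in_comp_reps[OF assms(1), of 1] assms(2) by auto
  then show "1 \<le> card (comp_reps n S)"
    unfolding comp_reps_def by (simp add: Suc_le_eq card_gt_0_iff)
  have "comp_reps n S \<subseteq> {1..n}" unfolding comp_reps_def by blast
  then show "card (comp_reps n S) \<le> n" using card_mono[of "{1..n}"] by fastforce
qed

definition rep_depth :: "(nat \<Rightarrow> nat set) \<Rightarrow> nat \<Rightarrow> nat" where
  "rep_depth S v = (LEAST k. reach S k (comp_rep S v) v)"

lemma reach_rep_depth: "reach S (rep_depth S v) (comp_rep S v) v"
  unfolding rep_depth_def using conn_sym[OF conn_comp_rep[of S v]] unfolding conn_def
  by (rule LeastI_ex)

lemma exists_parent:
  assumes "comp_rep S v \<noteq> v"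
  shows "\<exists>x. edge S x v \<and> rep_depth S x < rep_depth S v"
proof -
  have "rep_depth S v \<noteq> 0" using reach_rep_depth[of S v] assms by (metis reach.simps(1))
  then obtain j where j: "rep_depth S v = Suc j" using not0_implies_Suc by blast
  have "\<not> reach S j (comp_rep S v) v"
    using not_less_Least[of j "\<lambda>k. reach S k (comp_rep S v) v"] j unfolding rep_depth_def by simp
  with reach_rep_depth[of S v] j obtain x where x: "reach S j (comp_rep S v) x" "edge S x v"
    by auto
  have "conn S (comp_rep S v) x" using x(1) unfolding conn_def by blast
  then have "comp_rep S x = comp_rep S v" by (metis comp_rep_eq comp_rep_idem)
  then have "rep_depth S x \<le> j" using x(1) unfolding rep_depth_def by (simp add: Least_le)
  with x(2) j show ?thesis by auto
qed

lemma card_Sigma_profile: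
  assumes "valid_profile n S"
  shows "finite (Sigma {1..n} S)" "card (Sigma {1..n} S) = (\<Sum>u\<in>{1..n}. card (S u))"
proof -
  have sub: "S u \<subseteq> {1..n}" if "u \<in> {1..n}" for u
    using assms that unfolding valid_profile_def by (metis Diff_subset order_trans)
  then have "Sigma {1..n} S \<subseteq> {1..n} \<times> {1..n}" by blast
  then show "finite (Sigma {1..n} S)" using finite_subset by blast
  show "card (Sigma {1..n} S) = (\<Sum>u\<in>{1..n}. card (S u))"
    using sub finite_subset[of _ "{1..n}"] by (intro card_SigmaI) blast+
qed

text \<open>Charging each non-representative to the link to its parent: two vertices charged to the
  same link would be each other's parent, contradicting the strict decrease of the depth.\<close>

lemma card_non_reps_le_links:
  assumes valid: "valid_profile n S"
  shows "n - card (comp_reps n S) \<le> (\<Sum>u\<in>{1..n}. card (S u))"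
proof -
  define N where "N = {1..n} - comp_reps n S"
  have "\<forall>v\<in>N. \<exists>x. edge S x v \<and> rep_depth S x < rep_depth S v"
    using exists_parent unfolding N_def comp_reps_def by blast
  then obtain p where p: "\<And>v. v \<in> N \<Longrightarrow> edge S (p v) v \<and> rep_depth S (p v) < rep_depth S v"
    by metis
  define link where "link v = (if p v \<in> S v then (v, p v) else (p v, v))" for v
  have "link ` N \<subseteq> Sigma {1..n} S"
  proof
    fix z assume "z \<in> link ` N"
    then obtain v where v: "v \<in> N" "z = link v" by auto
    show "z \<in> Sigma {1..n} S"
    proof (cases "p v \<in> S v")
      case True
      then show ?thesis using v unfolding link_def N_def by auto
    next
      case False
      then have "v \<in> S (p v)" using p[OF v(1)] unfolding edge_def by auto
      moreover then have "p v \<in> {1..n}" using valid unfolding valid_profile_def by (metis empty_iff)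
      ultimately show ?thesis using False v unfolding link_def by auto
    qed
  qed
  moreover have "inj_on link N"
  proof (rule inj_onI, rule ccontr)
    fix a b assume ab: "a \<in> N" "b \<in> N" "link a = link b" "a \<noteq> b"
    then have "a = p b \<and> b = p a" unfolding link_def by (auto split: if_splits)
    then show False using p[OF ab(1)] p[OF ab(2)] by (metis less_asym)
  qed
  ultimately have "card N \<le> card (Sigma {1..n} S)"
    using card_inj_on_le card_Sigma_profile(1)[OF valid] by blast
  moreover have "card N = n - card (comp_reps n S)"
    unfolding N_def comp_reps_def by (subst card_Diff_subset) (auto intro: finite_subset)
  ultimately show ?thesis using card_Sigma_profile(2)[OF valid] by simp
qed

definition far_weight :: "nat \<Rightarrow> (nat \<Rightarrow> real) \<Rightarrow> nat \<Rightarrow> (nat \<Rightarrow> nat set) \<Rightarrow> nat \<Rightarrow> real" where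
  "far_weight n w \<beta> S u = (\<Sum>v\<in>{v\<in>{1..n}. gdist S u v > enat \<beta>}. w v)"

lemma social_cost_eq:
  "social_cost n w \<alpha> \<beta> S = \<alpha> * real (\<Sum>u\<in>{1..n}. card (S u)) + (\<Sum>u\<in>{1..n}. far_weight n w \<beta> S u)"
  unfolding social_cost_def player_cost_def far_weight_def
  by (simp add: sum.distrib sum_distrib_left)

lemma far_weight_rep_ge:
  assumes wnn: "\<forall>v\<in>{1..n}. w v \<ge> 0" and u: "u \<in> comp_reps n S"
  shows "(\<Sum>v\<in>{1..n}. if comp_rep S v \<noteq> u then w v else 0) \<le> far_weight n w \<beta> S u"
proof -
  have other_comp: "enat \<beta> < gdist S u v" if "comp_rep S v \<noteq> u" for v
  proof -
    have "\<not> conn S u v" using that u comp_rep_eq[of S u v] unfolding comp_reps_def by auto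
    then show ?thesis using gdist_eq_infinity_iff by (metis enat_ord_code(4))
  qed
  have "(\<Sum>v\<in>{1..n}. if comp_rep S v \<noteq> u then w v else 0)
      = (\<Sum>v\<in>{v\<in>{1..n}. comp_rep S v \<noteq> u}. w v)"
    by (rule sum.inter_filter[symmetric]) simp
  also have "\<dots> \<le> far_weight n w \<beta> S u"
    unfolding far_weight_def using other_comp wnn by (intro sum_mono2) auto
  finally show ?thesis .
qed

text \<open>Every player v is counted once for each representative other than its own.\<close>

lemma far_weight_sum_ge:
  assumes valid: "valid_profile n S" and wnn: "\<forall>v\<in>{1..n}. w v \<ge> 0"
  shows "(real (card (comp_reps n S)) - 1) * (\<Sum>v\<in>{1..n}. w v)
           \<le> (\<Sum>u\<in>{1..n}. far_weight n w \<beta> S u)"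
proof -
  let ?R = "comp_reps n S"
  have finR: "finite ?R" unfolding comp_reps_def by simp
  have count: "(\<Sum>u\<in>?R. if comp_rep S v \<noteq> u then w v else 0) = (real (card ?R) - 1) * w v"
    if v: "v \<in> {1..n}" for v
  proof -
    have "(\<Sum>u\<in>?R. if comp_rep S v \<noteq> u then w v else 0) = (\<Sum>u\<in>{u\<in>?R. comp_rep S v \<noteq> u}. w v)"
      by (rule sum.inter_filter[OF finR, symmetric])
    also have "{u\<in>?R. comp_rep S v \<noteq> u} = ?R - {comp_rep S v}" by blast
    also have "(\<Sum>u\<in>?R - {comp_rep S v}. w v) = real (card (?R - {comp_rep S v})) * w v" by simp
    also have "card (?R - {comp_rep S v}) = card ?R - 1"
      using comp_rep_in_comp_reps[OF valid v] finR by simp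
    moreover have "1 \<le> card ?R" using card_comp_reps_bounds(1)[OF valid] v by simp
    ultimately show ?thesis by (simp add: of_nat_diff)
  qed
  have "(real (card ?R) - 1) * (\<Sum>v\<in>{1..n}. w v)
      = (\<Sum>v\<in>{1..n}. \<Sum>u\<in>?R. if comp_rep S v \<noteq> u then w v else 0)"
    using count by (simp add: sum_distrib_left)
  also have "\<dots> = (\<Sum>u\<in>?R. \<Sum>v\<in>{1..n}. if comp_rep S v \<noteq> u then w v else 0)"
    by (rule sum.swap)
  also have "\<dots> \<le> (\<Sum>u\<in>?R. far_weight n w \<beta> S u)"
    using far_weight_rep_ge[OF wnn] by (rule sum_mono)
  also have "\<dots> \<le> (\<Sum>u\<in>{1..n}. far_weight n w \<beta> S u)"
    using wnn unfolding far_weight_def comp_reps_def by (intro sum_mono2 sum_nonneg) auto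
  finally show ?thesis .
qed

lemma social_cost_lower_bound:
  assumes valid: "valid_profile n S" and n1: "n \<ge> 1"
    and wnn: "\<forall>v\<in>{1..n}. w v \<ge> 0" and apos: "\<alpha> \<ge> 0"
  shows "min \<alpha> (\<Sum>v\<in>{1..n}. w v) * (real n - 1) \<le> social_cost n w \<alpha> \<beta> S"
proof -
  define k where "k = real (card (comp_reps n S))"
  define W where "W = (\<Sum>v\<in>{1..n}. w v)"
  have k: "1 \<le> k" "k \<le> real n"
    using card_comp_reps_bounds[OF valid n1] unfolding k_def by auto
  have "real (n - card (comp_reps n S)) \<le> real (\<Sum>u\<in>{1..n}. card (S u))"
    using card_non_reps_le_links[OF valid] by (simp only: of_nat_le_iff)
  then have links: "real n - k \<le> real (\<Sum>u\<in>{1..n}. card (S u))"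
    unfolding k_def by (simp only: of_nat_diff[OF card_comp_reps_bounds(2)[OF valid n1]])
  have "min \<alpha> W * (real n - 1) = min \<alpha> W * (real n - k) + min \<alpha> W * (k - 1)"
    by (simp add: algebra_simps)
  also have "\<dots> \<le> \<alpha> * (real n - k) + W * (k - 1)"
    using k by (intro add_mono mult_right_mono) auto
  also have "\<dots> \<le> \<alpha> * real (\<Sum>u\<in>{1..n}. card (S u)) + (\<Sum>u\<in>{1..n}. far_weight n w \<beta> S u)"
  proof (rule add_mono)
    show "\<alpha> * (real n - k) \<le> \<alpha> * real (\<Sum>u\<in>{1..n}. card (S u))"
      using links apos by (rule mult_left_mono)
    show "W * (k - 1) \<le> (\<Sum>u\<in>{1..n}. far_weight n w \<beta> S u)"
      using far_weight_sum_ge[OF valid wnn] unfolding k_def W_def by (simp only: mult.commute)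
  qed
  finally show ?thesis unfolding social_cost_eq W_def .
qed

lemma reach_empty_profile: "reach (\<lambda>_. {}) k u v \<longleftrightarrow> u = v"
  by (induction k arbitrary: v) (auto simp: edge_def)

lemma social_cost_empty_profile:
  "social_cost n w \<alpha> \<beta> (\<lambda>_. {}) = (\<Sum>v\<in>{1..n}. w v) * (real n - 1)"
proof -
  have far: "{v\<in>{1..n}. gdist (\<lambda>_. {}) u v > enat \<beta>} = {1..n} - {u}" for u
    unfolding gdist_def reach_empty_profile by (auto simp: zero_enat_def)
  have "social_cost n w \<alpha> \<beta> (\<lambda>_. {}) = (\<Sum>u\<in>{1..n}. (\<Sum>v\<in>{1..n}. w v) - w u)"
    unfolding social_cost_def player_cost_def far by (intro sum.cong) (auto simp: sum_diff1)
  also have "\<dots> = real n * (\<Sum>v\<in>{1..n}. w v) - (\<Sum>v\<in>{1..n}. w v)"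
    by (simp add: sum_subtractf)
  finally show ?thesis by (simp add: algebra_simps)
qed

lemma social_cost_star_profile:
  assumes n1: "n \<ge> 1" and b2: "\<beta> \<ge> 2"
  shows "social_cost n w \<alpha> \<beta> (\<lambda>u. if u = 1 then {2..n} else {}) = \<alpha> * (real n - 1)"
proof -
  define S where "S = (\<lambda>u::nat. if u = 1 then {2..n} else {})"
  have reach_center: "reach S 1 u 1" if "u \<in> {1..n}" for u
    using that by (auto simp: S_def edge_def)
  have reach2: "reach S 2 u v" if "u \<in> {1..n}" "v \<in> {1..n}" for u v
    using reach_trans[OF reach_center[OF that(1)] reach_sym[OF reach_center[OF that(2)]]]
    by (simp only: one_add_one)
  have no_far: "{v\<in>{1..n}. gdist S u v > enat \<beta>} = {}" if u: "u \<in> {1..n}" for u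
  proof -
    have "gdist S u v \<le> enat \<beta>" if v: "v \<in> {1..n}" for v
    proof -
      have "(LEAST k. reach S k u v) \<le> 2" using reach2[OF u v] by (rule Least_le)
      then show ?thesis unfolding gdist_def using reach2[OF u v] b2 by auto
    qed
    then show ?thesis by (auto simp: not_less[symmetric])
  qed
  have "player_cost n w \<alpha> \<beta> S u = (if u = 1 then \<alpha> * real (n - 1) else 0)"
    if "u \<in> {1..n}" for u
    unfolding player_cost_def no_far[OF that] by (simp add: S_def)
  then have "social_cost n w \<alpha> \<beta> S = (\<Sum>u\<in>{1..n}. if u = 1 then \<alpha> * real (n - 1) else 0)"
    unfolding social_cost_def by (rule sum.cong[OF refl])
  also have "\<dots> = \<alpha> * (real n - 1)" using n1 by (simp add: of_nat_diff)
  finally show ?thesis unfolding S_def .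
qed

lemma finite_valid_profiles: "finite {S. valid_profile n S}"
proof (rule finite_subset)
  show "{S. valid_profile n S} \<subseteq> {f. \<forall>x. (x \<in> {1..n} \<longrightarrow> f x \<in> Pow {1..n}) \<and> (x \<notin> {1..n} \<longrightarrow> f x = {})}"
    unfolding valid_profile_def by (auto split: if_splits)
  show "finite {f. \<forall>x. (x \<in> {1..n} \<longrightarrow> f x \<in> Pow {1..n}) \<and> (x \<notin> {1..n} \<longrightarrow> f x = ({}::nat set))}"
    by (rule finite_set_of_finite_funs) auto
qed

theorem proposition2:
  fixes n :: nat and w :: "nat \<Rightarrow> real" and \<alpha> :: real and \<beta> :: nat
  assumes "\<forall>u\<in>{1..n}. w u > 0"
    and "\<alpha> > 0"
    and "1 \<le> \<beta>" and "\<beta> \<le> n - 1"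
    and "\<beta> > 1"
  shows "opt n w \<alpha> \<beta> = min \<alpha> (\<Sum>u\<in>{1..n}. w u) * (real n - 1)"
proof -
  have n1: "n \<ge> 1" and b2: "\<beta> \<ge> 2" using assms(4,5) by auto
  have wnn: "\<forall>v\<in>{1..n}. w v \<ge> 0" using assms(1) by (simp add: less_imp_le)
  let ?star = "\<lambda>u. if u = 1 then {2..n} else {}"
  have attained: "min \<alpha> (\<Sum>u\<in>{1..n}. w u) * (real n - 1) \<in> social_cost n w \<alpha> \<beta> ` {S. valid_profile n S}"
  proof -
    have "valid_profile n (\<lambda>_. {})" "valid_profile n ?star" unfolding valid_profile_def by auto
    then show ?thesis
      using social_cost_empty_profile[of n w \<alpha> \<beta>] social_cost_star_profile[OF n1 b2, of w \<alpha>]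
      by (cases "\<alpha> \<le> (\<Sum>u\<in>{1..n}. w u)") (auto simp: min_def image_iff)
  qed
  show ?thesis unfolding opt_def
    using finite_valid_profiles attained social_cost_lower_bound[OF _ n1 wnn less_imp_le[OF assms(2)]]
    by (intro Min_eqI) auto
qed

end
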